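(* There are absolute constants $c_1,c_2\ge0$ such that the following holds. Let $\mathcal{A}$ be any (online or offline, deterministic) algorithm for the online stochastic rewards problem that makes each offer before learning its outcome, fix a resource $i$ and outcomes $\omega_{-i}$ of all edges not incident to $i$, and let $\tau(\mathcal{A})$ be the sum of $p_{it}$ over all arrivals $t$ to which $\mathcal{A}$ offers $i$ when every offer of $i$ fails (and other outcomes are given by $\omega_{-i}$). If $\tau(\mathcal{A})>0$, then $$\frac{\Pr\big[\mathcal{A}\text{ successfully matches } i\,\big|\,\omega_{-i}\big]}{1-e^{-\tau(\mathcal{A})}}\in\big[1-c_1\sqrt{p_{\max}},\,1+c_2\sqrt{p_{\max}}\big],$$ where the probability is over the independent outcomes of edges incident to $i$ and $p_{\max}=\max_{(i',t')\in E}p_{i't'}$.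
   Context: Online stochastic rewards problem: bipartite graph $G=(I,T,E)$, resources $i\in I$ with unit capacity, arrivals $t\in T$ with edge probabilities $p_{it}\in[0,1]$; each arrival is offered at most one available neighbour; the offer of $i$ to $t$ succeeds with probability $p_{it}$ independently of all else, making $i$ unavailable; a failed offer leaves $i$ available. $\omega_{-i}$ denotes a fixed realization of the outcomes of all edges not incident to $i$. *)

theory Defs
  imports "HOL-Probability.Probability"
begin

text \<open>A history is the list of offers
  made so far, each recorded as (resource, arrival, outcome) with outcome True = success.
  A deterministic (online or offline) algorithm is an adaptive rule: given the history
  of previous offers and their outcomes it chooses the next offer (or stops).  Hence
  every offer is chosen before its outcome is learnt.\<close>

type_synonym hist = "(nat \<times> nat \<times> bool) list"

definition offered_arrivals :: "hist \<Rightarrow> nat set" where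
  "offered_arrivals h = {t. \<exists>r b. (r, t, b) \<in> set h}"

definition matched_in :: "hist \<Rightarrow> nat \<Rightarrow> bool" where
  "matched_in h r \<longleftrightarrow> (\<exists>t. (r, t, True) \<in> set h)"

definition valid_alg :: "(nat \<times> nat) set \<Rightarrow> (hist \<Rightarrow> (nat \<times> nat) option) \<Rightarrow> bool" where
  "valid_alg E alg \<longleftrightarrow>
     (\<forall>h r t. alg h = Some (r, t) \<longrightarrow>
        (r, t) \<in> E \<and> t \<notin> offered_arrivals h \<and> \<not> matched_in h r)"

text \<open>Execution of the algorithm under a full outcome realization \<omega> (\<omega> r t = True
  iff the offer of r to t would succeed).\<close>
primrec run :: "(hist \<Rightarrow> (nat \<times> nat) option) \<Rightarrow> (nat \<Rightarrow> nat \<Rightarrow> bool) \<Rightarrow> nat \<Rightarrow> hist" where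
  "run alg \<omega> 0 = []"
| "run alg \<omega> (Suc n) =
     (let h = run alg \<omega> n in
      case alg h of None \<Rightarrow> h | Some (r, t) \<Rightarrow> h @ [(r, t, \<omega> r t)])"

text \<open>Since each arrival is offered at most once, card T steps suffice.\<close>
definition final_hist :: "(hist \<Rightarrow> (nat \<times> nat) option) \<Rightarrow> (nat \<Rightarrow> nat \<Rightarrow> bool) \<Rightarrow> nat set \<Rightarrow> hist" where
  "final_hist alg \<omega> T = run alg \<omega> (card T)"

definition tau :: "(hist \<Rightarrow> (nat \<times> nat) option) \<Rightarrow> (nat \<Rightarrow> nat \<Rightarrow> bool) \<Rightarrow> nat set
                   \<Rightarrow> (nat \<Rightarrow> nat \<Rightarrow> real) \<Rightarrow> nat \<Rightarrow> real" where
  "tau alg \<omega>0 T p i =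
     (\<Sum>t \<in> {t. (i, t, False) \<in> set (final_hist alg (\<omega>0(i := (\<lambda>_. False))) T)}. p i t)"

definition prob_match :: "(hist \<Rightarrow> (nat \<times> nat) option) \<Rightarrow> (nat \<Rightarrow> nat \<Rightarrow> bool) \<Rightarrow> nat set
                   \<Rightarrow> (nat \<times> nat) set \<Rightarrow> (nat \<Rightarrow> nat \<Rightarrow> real) \<Rightarrow> nat \<Rightarrow> real" where
  "prob_match alg \<omega>0 T E p i =
     measure_pmf.prob (Pi_pmf {t. (i, t) \<in> E} False (\<lambda>t. bernoulli_pmf (p i t)))
       {x. matched_in (final_hist alg (\<omega>0(i := x)) T) i}"

definition p_max :: "(nat \<times> nat) set \<Rightarrow> (nat \<Rightarrow> nat \<Rightarrow> real) \<Rightarrow> real" where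
  "p_max E p = Max ((\<lambda>(r, t). p r t) ` E)"

end

theory Submission
  imports Defs
begin

text \<open>Fix the outcomes off the row of \<open>i\<close>, and let \<open>S\<close> be the set of arrivals offered \<open>i\<close> in the
  run where every offer of \<open>i\<close> fails.  For an arbitrary row \<open>x\<close>, the run coincides with
  that failure run up to the first offer of \<open>i\<close> that succeeds, so \<open>i\<close> gets matched iff
  \<open>x t\<close> holds for some \<open>t \<in> S\<close>.  Hence the matching probability is exactly
  \<open>1 - (\<Prod>t\<in>S. 1 - p t)\<close> with \<open>\<tau> = (\<Sum>t\<in>S. p t)\<close>, and the claim reduces to comparing this
  product with \<open>exp (- \<tau>)\<close>: it is at most \<open>exp (- \<tau>)\<close>, and at least \<open>exp (- (1 + 2 p\<^sub>m\<^sub>a\<^sub>x) \<tau>)\<close>;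
  convexity of \<open>exp\<close> turns the latter into the factor \<open>1 + 2 p\<^sub>m\<^sub>a\<^sub>x \<le> 1 + 2 \<surd>p\<^sub>m\<^sub>a\<^sub>x\<close>.\<close>

lemma set_run_mono: "m \<le> n \<Longrightarrow> set (run alg \<omega>0 m) \<subseteq> set (run alg \<omega>0 n)"
  by (induction n rule: dec_induct) (auto simp: Let_def split: option.splits)

lemma run_offer_in_edges:
  assumes "valid_alg E alg" "(r, t, b) \<in> set (run alg \<omega>0 n)"
  shows "(r, t) \<in> E"
  using assms(2)
  by (induction n) (use assms(1) in \<open>auto simp: valid_alg_def Let_def split: option.splits\<close>)

definition failure_offers ::
    "(hist \<Rightarrow> (nat \<times> nat) option) \<Rightarrow> (nat \<Rightarrow> nat \<Rightarrow> bool) \<Rightarrow> nat \<Rightarrow> nat \<Rightarrow> nat set" where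
  "failure_offers alg \<omega>0 i n = {t. (i, t, False) \<in> set (run alg (\<omega>0(i := (\<lambda>_. False))) n)}"

lemma failure_offers_mono: "m \<le> n \<Longrightarrow> failure_offers alg \<omega>0 i m \<subseteq> failure_offers alg \<omega>0 i n"
  unfolding failure_offers_def using set_run_mono by blast

lemma run_eq_failure_run:
  assumes "\<forall>t \<in> failure_offers alg \<omega>0 i n. \<not> x t"
  shows "run alg (\<omega>0(i := x)) n = run alg (\<omega>0(i := \<lambda>_. False)) n"
  using assms
proof (induction n)
  case (Suc n)
  then have IH: "run alg (\<omega>0(i := x)) n = run alg (\<omega>0(i := \<lambda>_. False)) n"
    using failure_offers_mono[OF le_SucI[OF order_refl], of alg \<omega>0 i] by blast
  from Suc.prems show ?case
    unfolding failure_offers_def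
    by (simp only: run.simps Let_def IH) (auto split: option.splits)
qed simp

lemma matched_in_run_iff:
  "matched_in (run alg (\<omega>0(i := x)) n) i \<longleftrightarrow> (\<exists>t \<in> failure_offers alg \<omega>0 i n. x t)"
proof (induction n)
  case 0
  then show ?case by (simp add: matched_in_def failure_offers_def)
next
  case (Suc n)
  show ?case
  proof (cases "\<exists>t \<in> failure_offers alg \<omega>0 i n. x t")
    case True
    then have "matched_in (run alg (\<omega>0(i := x)) (Suc n)) i"
      using Suc.IH set_run_mono[OF le_SucI[OF order_refl], of alg "\<omega>0(i := x)"]
      unfolding matched_in_def by blast
    with True show ?thesis
      using failure_offers_mono[OF le_SucI[OF order_refl], of alg \<omega>0 i] by blast
  next
    case False
    then have eq: "run alg (\<omega>0(i := x)) n = run alg (\<omega>0(i := \<lambda>_. False)) n"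
      by (intro run_eq_failure_run) blast
    have unmatched: "\<not> matched_in (run alg (\<omega>0(i := x)) n) i"
      using Suc.IH False by blast
    show ?thesis
    proof (cases "alg (run alg (\<omega>0(i := \<lambda>_. False)) n)")
      case None
      then show ?thesis using False unmatched
        by (simp only: failure_offers_def run.simps Let_def eq) simp
    next
      case (Some a)
      then show ?thesis using False unmatched
        by (cases a) (simp only: failure_offers_def run.simps Let_def eq, auto simp: matched_in_def)
    qed
  qed
qed

lemma prob_Pi_bernoulli_exists_true:
  assumes "finite A" "S \<subseteq> A" "\<forall>t\<in>S. 0 \<le> q t \<and> q t \<le> 1"
  shows "measure_pmf.prob (Pi_pmf A False (\<lambda>t. bernoulli_pmf (q t))) {x. \<exists>t\<in>S. x t}
           = 1 - (\<Prod>t\<in>S. 1 - q t)"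
proof -
  let ?F = "\<lambda>t. if t \<in> S then {False} else UNIV"
  have compl: "{x. \<exists>t\<in>S. x t} = UNIV - Pi A ?F"
    using assms(2) by (auto simp: Pi_def)
  have "measure_pmf.prob (Pi_pmf A False (\<lambda>t. bernoulli_pmf (q t))) (Pi A ?F)
        = (\<Prod>t\<in>A. measure_pmf.prob (bernoulli_pmf (q t)) (?F t))"
    using assms(1) by (rule measure_Pi_pmf_Pi)
  also have "\<dots> = (\<Prod>t\<in>A. if t \<in> S then 1 - q t else 1)"
    using assms(3) by (intro prod.cong) (auto simp: measure_pmf_single)
  also have "\<dots> = (\<Prod>t\<in>S. 1 - q t)"
    using assms(1,2) by (simp add: prod.If_cases Int_absorb1 Int_commute)
  finally show ?thesis
    unfolding compl using measure_pmf.prob_compl[of "Pi A ?F"] by simp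
qed

lemma prob_match_eq:
  assumes "finite T" "E \<subseteq> I \<times> T" "\<forall>(r, t) \<in> E. 0 \<le> p r t \<and> p r t \<le> 1" "valid_alg E alg"
  shows "prob_match alg \<omega>0 T E p i = 1 - (\<Prod>t \<in> failure_offers alg \<omega>0 i (card T). 1 - p i t)"
proof -
  let ?A = "{t. (i, t) \<in> E}" and ?S = "failure_offers alg \<omega>0 i (card T)"
  have "?S \<subseteq> ?A"
    unfolding failure_offers_def using run_offer_in_edges[OF assms(4)] by blast
  moreover have "finite ?A"
    using assms(1,2) by (auto intro: finite_subset)
  ultimately show ?thesis
    unfolding prob_match_def final_hist_def matched_in_run_iff
    using assms(3) by (intro prob_Pi_bernoulli_exists_true) auto
qed

lemma tau_eq_sum_failure_offers:
  "tau alg \<omega>0 T p i = (\<Sum>t \<in> failure_offers alg \<omega>0 i (card T). p i t)"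
  by (simp add: tau_def final_hist_def failure_offers_def)

lemma prod_one_minus_le_exp:
  fixes q :: "'a \<Rightarrow> real"
  assumes "\<forall>t\<in>S. q t \<le> 1"
  shows "(\<Prod>t\<in>S. 1 - q t) \<le> exp (- sum q S)"
proof (cases "finite S")
  case True
  have "1 - q t \<le> exp (- q t)" for t
    using exp_ge_add_one_self[of "- q t"] by simp
  then have "(\<Prod>t\<in>S. 1 - q t) \<le> (\<Prod>t\<in>S. exp (- q t))"
    using assms by (intro prod_mono) auto
  also have "\<dots> = exp (- sum q S)"
    using True by (simp add: exp_sum sum_negf[symmetric])
  finally show ?thesis .
qed simp

lemma exp_le_prod_one_minus:
  fixes q :: "'a \<Rightarrow> real"
  assumes "\<forall>t\<in>S. 0 \<le> q t \<and> q t \<le> pm" "pm \<le> 1/2"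
  shows "exp (- ((1 + 2 * pm) * sum q S)) \<le> (\<Prod>t\<in>S. 1 - q t)"
proof (cases "finite S")
  case True
  have "exp (- ((1 + 2 * pm) * q t)) \<le> 1 - q t" if t: "t \<in> S" for t
  proof -
    have q: "0 \<le> q t" "q t \<le> pm" using assms t by auto
    have "- ((1 + 2 * pm) * q t) \<le> - q t - 2 * (q t)\<^sup>2"
      using q by (simp add: power2_eq_square algebra_simps mult_right_mono)
    also have "\<dots> \<le> ln (1 - q t)"
      using q assms by (intro ln_one_minus_pos_lower_bound) auto
    finally have "exp (- ((1 + 2 * pm) * q t)) \<le> exp (ln (1 - q t))"
      by simp
    also have "\<dots> = 1 - q t"
      using q assms(2) by simp
    finally show ?thesis .
  qed
  then have "(\<Prod>t\<in>S. exp (- ((1 + 2 * pm) * q t))) \<le> (\<Prod>t\<in>S. 1 - q t)"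
    by (intro prod_mono) auto
  then show ?thesis
    using True by (simp add: exp_sum sum_negf[symmetric] sum_distrib_left)
qed simp

lemma one_minus_exp_scale_le:
  fixes a y :: real
  assumes "1 \<le> a"
  shows "1 - exp (- (a * y)) \<le> a * (1 - exp (- y))"
proof -
  have "exp ((1/a) * (- (a * y)) + (1 - 1/a) * 0) \<le> (1/a) * exp (- (a * y)) + (1 - 1/a) * exp 0"
    using convex_onD[OF exp_convex, of "1 - 1/a" "- (a * y)" 0] assms by (simp add: field_simps)
  then have "exp (- y) \<le> (1/a) * exp (- (a * y)) + (1 - 1/a)"
    using assms by simp
  then have "a * exp (- y) \<le> a * ((1/a) * exp (- (a * y)) + (1 - 1/a))"
    using assms by (intro mult_left_mono) auto
  also have "\<dots> = exp (- (a * y)) + a - 1"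
    using assms by (simp add: algebra_simps)
  finally show ?thesis by (simp add: algebra_simps)
qed

lemma one_minus_prod_le_twice:
  fixes q :: "'a \<Rightarrow> real"
  assumes "finite S" "\<forall>t\<in>S. 0 \<le> q t \<and> q t \<le> 1"
  shows "1 - (\<Prod>t\<in>S. 1 - q t) \<le> 2 * (1 - exp (- sum q S))"
proof -
  let ?s = "sum q S"
  have s: "0 \<le> ?s" using assms(2) by (simp add: sum_nonneg)
  \<comment> \<open>\<open>1 - \<Prod>\<close> is at most \<open>min 1 s\<close>, while \<open>1 - exp (- s) \<ge> s / (1 + s) \<ge> min 1 s / 2\<close>.\<close>
  have "exp (- ?s) \<le> 1 / (1 + ?s)"
    using exp_ge_add_one_self[of ?s] s by (simp add: exp_minus field_simps)
  then have e: "?s / (1 + ?s) \<le> 1 - exp (- ?s)"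
    using s by (simp add: field_simps)
  have "1 - (\<Prod>t\<in>S. 1 - q t) \<le> ?s"
    using Weierstrass_prod_ineq[of S q] assms(2) by auto
  moreover have "1 - (\<Prod>t\<in>S. 1 - q t) \<le> 1"
    using assms(2) by (simp add: prod_nonneg)
  ultimately have "1 - (\<Prod>t\<in>S. 1 - q t) \<le> min 1 ?s"
    by simp
  moreover have "min 1 ?s \<le> 2 * (?s / (1 + ?s))"
    using s by (auto simp: field_simps min_def mult_left_le)
  ultimately have "1 - (\<Prod>t\<in>S. 1 - q t) \<le> 2 * (?s / (1 + ?s))"
    by linarith
  also have "\<dots> \<le> 2 * (1 - exp (- ?s))"
    using e by simp
  finally show ?thesis .
qed

lemma one_minus_prod_le_one_minus_exp:
  fixes q :: "'a \<Rightarrow> real"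
  assumes "finite S" "\<forall>t\<in>S. 0 \<le> q t \<and> q t \<le> pm" "pm \<le> 1"
  shows "1 - (\<Prod>t\<in>S. 1 - q t) \<le> (1 + 2 * sqrt pm) * (1 - exp (- sum q S))"
proof (cases "S = {}")
  case False
  then have pm: "0 \<le> pm" using assms(2) by force
  have d: "0 \<le> 1 - exp (- sum q S)"
    using assms(2) pm by (simp add: sum_nonneg)
  show ?thesis
  proof (cases "pm \<le> 1/2")
    case True
    have "1 - (\<Prod>t\<in>S. 1 - q t) \<le> 1 - exp (- ((1 + 2 * pm) * sum q S))"
      using exp_le_prod_one_minus[OF assms(2) True] by simp
    also have "\<dots> \<le> (1 + 2 * pm) * (1 - exp (- sum q S))"
      using pm by (intro one_minus_exp_scale_le) auto
    also have "\<dots> \<le> (1 + 2 * sqrt pm) * (1 - exp (- sum q S))"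
      using pm assms(3) d
      by (intro mult_right_mono) (auto intro!: real_le_rsqrt simp: power2_eq_square mult_left_le)
    finally show ?thesis .
  next
    case False
    then have "sqrt (1/4) \<le> sqrt pm" by simp
    then have "2 \<le> 1 + 2 * sqrt pm" by (simp add: real_sqrt_divide)
    have "1 - (\<Prod>t\<in>S. 1 - q t) \<le> 2 * (1 - exp (- sum q S))"
      using assms(2,3) by (intro one_minus_prod_le_twice[OF assms(1)]) force
    also have "\<dots> \<le> (1 + 2 * sqrt pm) * (1 - exp (- sum q S))"
      using \<open>2 \<le> 1 + 2 * sqrt pm\<close> d by (rule mult_right_mono)
    finally show ?thesis .
  qed
qed simp

lemma p_le_p_max: "finite E \<Longrightarrow> (r, t) \<in> E \<Longrightarrow> p r t \<le> p_max E p"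
  unfolding p_max_def by (intro Max_ge) force+

lemma p_max_le_one:
  "finite E \<Longrightarrow> E \<noteq> {} \<Longrightarrow> \<forall>(r, t) \<in> E. p r t \<le> 1 \<Longrightarrow> p_max E p \<le> 1"
  unfolding p_max_def by (intro Max.boundedI) auto

lemma prob_match_ratio_bounds:
  assumes "finite I" "finite T" "E \<subseteq> I \<times> T"
    and p: "\<forall>(r, t) \<in> E. 0 \<le> p r t \<and> p r t \<le> 1"
    and alg: "valid_alg E alg" and pos: "tau alg \<omega>0 T p i > 0"
  shows "1 \<le> prob_match alg \<omega>0 T E p i / (1 - exp (- tau alg \<omega>0 T p i))"
    and "prob_match alg \<omega>0 T E p i / (1 - exp (- tau alg \<omega>0 T p i))
           \<le> 1 + 2 * sqrt (p_max E p)"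
proof -
  define S where "S = failure_offers alg \<omega>0 i (card T)"
  have SE: "(i, t) \<in> E" if "t \<in> S" for t
    using that run_offer_in_edges[OF alg] by (auto simp: S_def failure_offers_def)
  have finE: "finite E" using assms(1-3) by (auto intro: finite_subset)
  have finS: "finite S"
    using SE by (intro finite_subset[OF _ finite_imageI[OF finE, of snd]]) force
  have tau: "tau alg \<omega>0 T p i = sum (p i) S"
    and match: "prob_match alg \<omega>0 T E p i = 1 - (\<Prod>t\<in>S. 1 - p i t)"
    using prob_match_eq[OF assms(2-3) p alg] by (simp_all add: tau_eq_sum_failure_offers S_def)
  have "S \<noteq> {}" using pos tau by auto
  then have pm: "p_max E p \<le> 1" using SE p_max_le_one[OF finE] p by blast
  have bounds: "\<forall>t\<in>S. 0 \<le> p i t \<and> p i t \<le> p_max E p"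
    using SE p p_le_p_max[OF finE] by fast
  have d: "0 < 1 - exp (- sum (p i) S)" using pos tau by simp
  have "1 - exp (- sum (p i) S) \<le> 1 - (\<Prod>t\<in>S. 1 - p i t)"
    using prod_one_minus_le_exp[of S "p i"] bounds pm by force
  then show "1 \<le> prob_match alg \<omega>0 T E p i / (1 - exp (- tau alg \<omega>0 T p i))"
    using d by (simp add: match tau le_divide_eq)
  have "1 - (\<Prod>t\<in>S. 1 - p i t)
      \<le> (1 + 2 * sqrt (p_max E p)) * (1 - exp (- sum (p i) S))"
    by (rule one_minus_prod_le_one_minus_exp[OF finS bounds pm])
  then show "prob_match alg \<omega>0 T E p i / (1 - exp (- tau alg \<omega>0 T p i))
      \<le> 1 + 2 * sqrt (p_max E p)"
    using d by (simp add: match tau divide_le_eq)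
qed

theorem lemma8:
  shows "\<exists>c1 c2 :: real. c1 \<ge> 0 \<and> c2 \<ge> 0 \<and>
    (\<forall>(I :: nat set) (T :: nat set) (E :: (nat \<times> nat) set) (p :: nat \<Rightarrow> nat \<Rightarrow> real)
       (alg :: hist \<Rightarrow> (nat \<times> nat) option) (\<omega>0 :: nat \<Rightarrow> nat \<Rightarrow> bool) (i :: nat).
       finite I \<and> finite T \<and> E \<subseteq> I \<times> T \<and>
       (\<forall>(r, t) \<in> E. 0 \<le> p r t \<and> p r t \<le> 1) \<and>
       valid_alg E alg \<and> i \<in> I \<and> tau alg \<omega>0 T p i > 0 \<longrightarrow>
       prob_match alg \<omega>0 T E p i / (1 - exp (- tau alg \<omega>0 T p i))
         \<in> {1 - c1 * sqrt (p_max E p) .. 1 + c2 * sqrt (p_max E p)})"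
  using prob_match_ratio_bounds by (intro exI[of _ 0] exI[of _ 2]) auto

end
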